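(* For strictly positive formulas $A,B$: (i) $A\vdash_{\mathbf{RJ}}B$ iff $\mathrm{RJ}_S[A]\Vdash B$, where $S=\ell(A)$; (ii) $A\vdash_{\mathbf{RC}}B$ iff $\mathrm{RC}_S[A]\Vdash B$, where $S=\ell(\{A,B\})$. Here $\Vdash$ means truth at the root.
   Context: Strictly positive formulas: $A::= p\mid \top\mid (A\land B)\mid \alpha A$, $\alpha\le\omega$; $\ell(X)$ is the set of modalities occurring in formulas of $X$. $\mathbf{RJ}$: $A\vdash A$; $A\vdash\top$; cut; $A\land B\vdash A$; $A\land B\vdash B$; from $A\vdash B$, $A\vdash C$ infer $A\vdash B\land C$; from $A\vdash B$ infer $\alpha A\vdash\alpha B$; $\alpha\alpha A\vdash\alpha A$; $\alpha\beta A\vdash\beta A$, $\beta\alpha A\vdash\beta A$ for $\alpha\ge\beta$; $\alpha A\land\beta B\vdash\alpha(A\land\beta B)$ for $\alpha>\beta$. $\mathbf{RC}=\mathbf{RJ}+\{\alpha A\vdash\beta A:\alpha>\beta\}$. Kripke models of signature $S$: $W$, relations $(R_\alpha)_{\alpha\in S}$, valuation, usual forcing with $x\Vdash\alpha A$ iff $\exists y(xR_\alpha y\wedge y\Vdash A)$. RJ$_S$-frame: $R_\alpha R_\beta\subseteq R_{\min(\alpha,\beta)}$ for $\alpha,\beta\in S$, and for $\alpha>\beta$ in $S$, $xR_\alpha y\wedge xR_\beta z\Rightarrow yR_\beta z$. RC$_S$-frame: RJ$_S$-frame with $R_\alpha\subseteq R_\beta$ for $\beta<\alpha$. The canonical tree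 $T[A]$: for a variable or $\top$, one node with empty relations where only that variable is true; $T[B\land C]$: disjoint union of $T[B],T[C]$ with roots identified, a variable true at the root iff true at either root; $T[\alpha B]$: $T[B]$ plus a new root $r$ (all variables false) with $rR_\alpha$(root of $T[B]$). For $S\supseteq\ell(A)$, $\mathrm{RJ}_S[A]$ (resp. $\mathrm{RC}_S[A]$) is the model on the same set and valuation as $T[A]$ whose relations are the least relations containing those of $T[A]$ (relations for $\alpha\in S\setminus\ell(A)$ starting empty) forming an RJ$_S$-frame (resp. RC$_S$-frame). *)

theory Defs
  imports Main "HOL-Library.Extended_Nat"
begin

text \<open>Strictly positive formulas; modalities are ordinals \<open>\<le> \<omega>\<close>, i.e. elements of enat
  (\<open>\<infinity>\<close> plays the role of \<open>\<omega>\<close>).\<close>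
datatype 'p fm = Var 'p | Top | Conj "'p fm" "'p fm" | Dia enat "'p fm"

primrec mods :: "'p fm \<Rightarrow> enat set" where
  "mods (Var p) = {}"
| "mods Top = {}"
| "mods (Conj A B) = mods A \<union> mods B"
| "mods (Dia a A) = insert a (mods A)"

inductive RJ :: "'p fm \<Rightarrow> 'p fm \<Rightarrow> bool" where
  rj_refl: "RJ A A"
| rj_top: "RJ A Top"
| rj_cut: "RJ A B \<Longrightarrow> RJ B C \<Longrightarrow> RJ A C"
| rj_conjE1: "RJ (Conj A B) A"
| rj_conjE2: "RJ (Conj A B) B"
| rj_conjI: "RJ A B \<Longrightarrow> RJ A C \<Longrightarrow> RJ A (Conj B C)"
| rj_mono: "RJ A B \<Longrightarrow> RJ (Dia a A) (Dia a B)"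
| rj_trans: "RJ (Dia a (Dia a A)) (Dia a A)"
| rj_mon1: "a \<ge> b \<Longrightarrow> RJ (Dia a (Dia b A)) (Dia b A)"
| rj_mon2: "a \<ge> b \<Longrightarrow> RJ (Dia b (Dia a A)) (Dia b A)"
| rj_J: "a > b \<Longrightarrow> RJ (Conj (Dia a A) (Dia b B)) (Dia a (Conj A (Dia b B)))"

inductive RC :: "'p fm \<Rightarrow> 'p fm \<Rightarrow> bool" where
  rc_refl: "RC A A"
| rc_top: "RC A Top"
| rc_cut: "RC A B \<Longrightarrow> RC B C \<Longrightarrow> RC A C"
| rc_conjE1: "RC (Conj A B) A"
| rc_conjE2: "RC (Conj A B) B"
| rc_conjI: "RC A B \<Longrightarrow> RC A C \<Longrightarrow> RC A (Conj B C)"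
| rc_mono: "RC A B \<Longrightarrow> RC (Dia a A) (Dia a B)"
| rc_trans: "RC (Dia a (Dia a A)) (Dia a A)"
| rc_mon1: "a \<ge> b \<Longrightarrow> RC (Dia a (Dia b A)) (Dia b A)"
| rc_mon2: "a \<ge> b \<Longrightarrow> RC (Dia b (Dia a A)) (Dia b A)"
| rc_J: "a > b \<Longrightarrow> RC (Conj (Dia a A) (Dia b B)) (Dia a (Conj A (Dia b B)))"
| rc_C: "a > b \<Longrightarrow> RC (Dia a A) (Dia b A)"

primrec forces :: "(enat \<Rightarrow> ('w \<times> 'w) set) \<Rightarrow> ('p \<Rightarrow> 'w set) \<Rightarrow> 'w \<Rightarrow> 'p fm \<Rightarrow> bool" where
  "forces R V x (Var p) = (x \<in> V p)"
| "forces R V x Top = True"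
| "forces R V x (Conj A B) = (forces R V x A \<and> forces R V x B)"
| "forces R V x (Dia a A) = (\<exists>y. (x, y) \<in> R a \<and> forces R V y A)"

definition RJ_frame :: "enat set \<Rightarrow> (enat \<Rightarrow> ('w \<times> 'w) set) \<Rightarrow> bool" where
  "RJ_frame S R \<longleftrightarrow>
     (\<forall>a\<in>S. \<forall>b\<in>S. R a O R b \<subseteq> R (min a b)) \<and>
     (\<forall>a\<in>S. \<forall>b\<in>S. a > b \<longrightarrow> (\<forall>x y z. (x, y) \<in> R a \<and> (x, z) \<in> R b \<longrightarrow> (y, z) \<in> R b))"

definition RC_frame :: "enat set \<Rightarrow> (enat \<Rightarrow> ('w \<times> 'w) set) \<Rightarrow> bool" where
  "RC_frame S R \<longleftrightarrow> RJ_frame S R \<and> (\<forall>a\<in>S. \<forall>b\<in>S. b < a \<longrightarrow> R a \<subseteq> R b)"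

text \<open>Nodes are addresses (lists of directions); the root is \<open>[]\<close>.
  In \<open>T[B \<and> C]\<close> the roots of \<open>T[B]\<close>, \<open>T[C]\<close> are identified with the new root \<open>[]\<close>,
  the other nodes are tagged \<open>L\<close>/\<open>R\<close>. In \<open>T[\<alpha> B]\<close> the nodes of \<open>T[B]\<close> are tagged \<open>D\<close>.\<close>
datatype dir = L | R | D

definition emb :: "dir \<Rightarrow> dir list \<Rightarrow> dir list" where
  "emb d x = (if x = [] then [] else d # x)"

primrec tnodes :: "'p fm \<Rightarrow> dir list set" where
  "tnodes (Var p) = {[]}"
| "tnodes Top = {[]}"
| "tnodes (Conj A B) = emb L ` tnodes A \<union> emb R ` tnodes B"
| "tnodes (Dia a A) = insert [] ((#) D ` tnodes A)"

primrec trel :: "'p fm \<Rightarrow> enat \<Rightarrow> (dir list \<times> dir list) set" where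
  "trel (Var p) b = {}"
| "trel Top b = {}"
| "trel (Conj A B) b = map_prod (emb L) (emb L) ` trel A b \<union> map_prod (emb R) (emb R) ` trel B b"
| "trel (Dia a A) b = (if b = a then {([], [D])} else {}) \<union> map_prod ((#) D) ((#) D) ` trel A b"

primrec tval :: "'p fm \<Rightarrow> 'p \<Rightarrow> dir list set" where
  "tval (Var p) q = (if q = p then {[]} else {})"
| "tval Top q = {}"
| "tval (Conj A B) q = emb L ` tval A q \<union> emb R ` tval B q"
| "tval (Dia a A) q = (#) D ` tval A q"

definition least_rels ::
  "(enat set \<Rightarrow> (enat \<Rightarrow> (dir list \<times> dir list) set) \<Rightarrow> bool) \<Rightarrow> enat set \<Rightarrow> 'p fm
     \<Rightarrow> enat \<Rightarrow> (dir list \<times> dir list) set" where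
  "least_rels P S A a =
     (if a \<in> S then
        \<Inter> {R' a | R'. (\<forall>b\<in>S. trel A b \<subseteq> R' b \<and> R' b \<subseteq> tnodes A \<times> tnodes A) \<and> P S R'}
      else {})"

definition RJ_model_rel :: "enat set \<Rightarrow> 'p fm \<Rightarrow> enat \<Rightarrow> (dir list \<times> dir list) set" where
  "RJ_model_rel S A = least_rels RJ_frame S A"

definition RC_model_rel :: "enat set \<Rightarrow> 'p fm \<Rightarrow> enat \<Rightarrow> (dir list \<times> dir list) set" where
  "RC_model_rel S A = least_rels RC_frame S A"

end

theory Submission
  imports Defs
begin

(*
  The proof rests on an explicit description of these least models.  Call a label sequence of a
  path in the tree T[A] c-good if it is nonempty, all labels are >= c and (for RJ) c occurs.
  Then (y, u) lies in the c-relation of the least model iff some node w reaches y by a path with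
  all labels > c and reaches u by a c-good path ("clo").  This relation is an RJ-frame (an
  RC-frame in the RC case), and it lies below every such frame containing the tree relations,
  so it IS the least model (least_rels_clo).

  Soundness: RJ is sound on RJ-frames whose relations vanish outside S; RC is sound on
  RC-frames indexed by all modalities.  For RC we use the closure with S = UNIV, which agrees
  with the least model on S, so truth of B (with l(B) <= S) transfers.
  Completeness: to every node y and depth n we attach a formula node_fm describing the subtree
  below y together with the R-successors inherited from ancestors (ctx_fm).  A derives the
  formula of the root, and every B forced at y in the closure model with depth B <= n is
  derived from it (truth_lemma).
*)

subsection \<open>Derivability in RJ and RC\<close>

definition der :: "bool \<Rightarrow> 'p fm \<Rightarrow> 'p fm \<Rightarrow> bool" where
  "der rc A B = (if rc then RC A B else RJ A B)"

lemma der_refl: "der rc A A" by (simp add: der_def RJ.intros RC.intros)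
lemma der_top: "der rc A Top" by (simp add: der_def RJ.intros RC.intros)
lemma der_cut: "der rc A B \<Longrightarrow> der rc B C \<Longrightarrow> der rc A C"
  by (auto simp: der_def split: if_splits intro: RJ.intros RC.intros)
lemma der_conjE1: "der rc (Conj A B) A" by (simp add: der_def RJ.intros RC.intros)
lemma der_conjE2: "der rc (Conj A B) B" by (simp add: der_def RJ.intros RC.intros)
lemma der_conjI: "der rc A B \<Longrightarrow> der rc A C \<Longrightarrow> der rc A (Conj B C)"
  by (auto simp: der_def split: if_splits intro: RJ.intros RC.intros)
lemma der_mono: "der rc A B \<Longrightarrow> der rc (Dia a A) (Dia a B)"
  by (auto simp: der_def split: if_splits intro: RJ.intros RC.intros)
lemma der_J: "a > b \<Longrightarrow> der rc (Conj (Dia a A) (Dia b B)) (Dia a (Conj A (Dia b B)))"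
  by (simp add: der_def RJ.intros RC.intros)
lemma der_C: "a > b \<Longrightarrow> der True (Dia a A) (Dia b A)" by (simp add: der_def RC.intros)

lemma der_dia_min: "der rc (Dia a (Dia b A)) (Dia (min a b) A)"
  by (cases "a \<ge> b") (simp_all add: min_def der_def rj_mon1 rj_mon2 rc_mon1 rc_mon2)

lemma der_J_intro: "a > b \<Longrightarrow> der rc H (Dia a A) \<Longrightarrow> der rc H (Dia b B)
    \<Longrightarrow> der rc H (Dia a (Conj A (Dia b B)))"
  using der_J der_conjI der_cut by blast

lemma der_assoc: "der rc (Conj (Conj A B) C) (Conj A (Conj B C))"
  by (meson der_conjE1 der_conjE2 der_conjI der_cut)

definition conjs :: "'p fm list \<Rightarrow> 'p fm" where "conjs xs = foldr Conj xs Top"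
definition bigconj :: "'p fm set \<Rightarrow> 'p fm" where "bigconj X = conjs (SOME xs. set xs = X)"

lemma conjs_mem: "f \<in> set xs \<Longrightarrow> der rc (conjs xs) f"
  by (induction xs) (auto simp: conjs_def intro: der_conjE1 der_cut[OF der_conjE2])
lemma conjs_intro: "(\<forall>f\<in>set xs. der rc H f) \<Longrightarrow> der rc H (conjs xs)"
  by (induction xs) (auto simp: conjs_def intro: der_conjI der_top)
lemma set_enumeration: "finite X \<Longrightarrow> set (SOME xs. set xs = X) = X"
  by (metis (mono_tags, lifting) finite_list someI_ex)
lemma bigconj_mem: "finite X \<Longrightarrow> f \<in> X \<Longrightarrow> der rc (bigconj X) f"
  unfolding bigconj_def using conjs_mem set_enumeration by metis
lemma bigconj_intro: "finite X \<Longrightarrow> (\<forall>f\<in>X. der rc H f) \<Longrightarrow> der rc H (bigconj X)"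
  unfolding bigconj_def using conjs_intro set_enumeration by metis

lemma der_J_conjs: "der rc H (Dia a P) \<Longrightarrow> (\<forall>f\<in>set xs. \<exists>c F. f = Dia c F \<and> c < a \<and> der rc H f)
   \<Longrightarrow> der rc H (Dia a (Conj P (conjs xs)))"
proof (induction xs arbitrary: P)
  case Nil
  have "der rc P (Conj P Top)" by (rule der_conjI[OF der_refl der_top])
  then show ?case using Nil der_cut der_mono unfolding conjs_def by fastforce
next
  case (Cons f xs)
  then obtain c F where f: "f = Dia c F" "c < a" "der rc H f" by auto
  have "der rc H (Dia a (Conj P f))" using der_J_intro Cons.prems f by blast
  then have "der rc H (Dia a (Conj (Conj P f) (conjs xs)))" using Cons by auto
  then show ?case by (simp add: conjs_def) (meson der_assoc der_cut der_mono)
qed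

lemma der_J_bigconj: "finite X \<Longrightarrow> der rc H (Dia a P)
   \<Longrightarrow> (\<forall>f\<in>X. \<exists>c F. f = Dia c F \<and> c < a \<and> der rc H f)
   \<Longrightarrow> der rc H (Dia a (Conj P (bigconj X)))"
  unfolding bigconj_def using der_J_conjs set_enumeration by metis

subsection \<open>The canonical tree and its paths\<close>

lemma trel_length: "(y,z) \<in> trel A a \<Longrightarrow> length y < length z"
proof (induction A arbitrary: y z)
  case (Conj A1 A2)
  then show ?case
    apply (auto simp: emb_def split: if_splits)
    by fastforce+
qed (auto split: if_splits)

lemma trel_parent: "(x,z) \<in> trel A a \<Longrightarrow> (y,z) \<in> trel A b \<Longrightarrow> x = y \<and> a = b"
proof (induction A arbitrary: x y z)
  case (Conj A1 A2)
  then show ?case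
    apply (auto simp: emb_def split: if_splits)
    by (metis less_nat_zero_code list.size(3) trel_length)+
next
  case (Dia c A)
  then show ?case
    apply (auto split: if_splits)
    by (metis less_nat_zero_code list.size(3) trel_length)+
qed auto

lemma root_node: "[] \<in> tnodes A" by (induction A) (auto simp: emb_def image_iff)

lemma trel_nodes: "(y,z) \<in> trel A a \<Longrightarrow> y \<in> tnodes A \<and> z \<in> tnodes A"
  by (induction A arbitrary: y z) (auto split: if_splits intro: root_node)

lemma trel_mods: "(y,z) \<in> trel A a \<Longrightarrow> a \<in> mods A"
  by (induction A arbitrary: y z) (auto split: if_splits)

lemma finite_tnodes: "finite (tnodes A)" by (induction A) auto
lemma finite_mods: "finite (mods A)" by (induction A) auto
lemma finite_tval: "finite {p. tval A p \<noteq> {}}"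
proof (induction A)
  case (Conj A1 A2)
  have "{p. tval (Conj A1 A2) p \<noteq> {}} \<subseteq> {p. tval A1 p \<noteq> {}} \<union> {p. tval A2 p \<noteq> {}}" by auto
  then show ?case using Conj finite_subset by blast
qed auto

inductive tpath :: "'p fm \<Rightarrow> dir list \<Rightarrow> dir list \<Rightarrow> enat list \<Rightarrow> bool" for A where
  tp_nil: "tpath A x x []"
| tp_cons: "(x,y) \<in> trel A a \<Longrightarrow> tpath A y z ls \<Longrightarrow> tpath A x z (a#ls)"

lemma tpath_nil_iff[simp]: "tpath A x y [] \<longleftrightarrow> x = y"
  by (auto elim: tpath.cases intro: tp_nil)

lemma tpath_append: "tpath A x y l \<Longrightarrow> tpath A y z l' \<Longrightarrow> tpath A x z (l @ l')"
  by (induction rule: tpath.induct) (auto intro: tp_cons)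

lemma tpath_snoc: "tpath A x z (ls @ [a]) \<Longrightarrow> \<exists>y. tpath A x y ls \<and> (y,z) \<in> trel A a"
proof (induction ls arbitrary: x)
  case Nil
  then show ?case by (auto elim: tpath.cases)
next
  case (Cons b ls)
  then obtain y where "(x,y) \<in> trel A b" "tpath A y z (ls @ [a])" by (auto elim: tpath.cases)
  then show ?case using Cons.IH tp_cons by blast
qed

lemma tpath_nodes: "tpath A x y l \<Longrightarrow> x \<in> tnodes A \<Longrightarrow> y \<in> tnodes A"
  by (induction rule: tpath.induct) (auto dest: trel_nodes)

lemma tpath_mods: "tpath A x y l \<Longrightarrow> set l \<subseteq> mods A"
  by (induction rule: tpath.induct) (auto dest: trel_mods)

lemma tpath_comparable:
  "tpath A w x l1 \<Longrightarrow> tpath A w' x l2 \<Longrightarrow>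
    (\<exists>l. tpath A w w' l \<and> l1 = l @ l2) \<or> (\<exists>l. tpath A w' w l \<and> l2 = l @ l1)"
proof (induction l1 arbitrary: x l2 rule: rev_induct)
  case Nil
  then show ?case by auto
next
  case (snoc a l1)
  then obtain y where y: "tpath A w y l1" "(y,x) \<in> trel A a" using tpath_snoc by blast
  show ?case
  proof (cases l2 rule: rev_exhaust)
    case Nil
    then show ?thesis using snoc.prems by auto
  next
    case (snoc l2' b)
    then obtain y' where y': "tpath A w' y' l2'" "(y',x) \<in> trel A b"
      using snoc.prems tpath_snoc by blast
    then have "y' = y" "b = a" using y trel_parent by blast+
    then show ?thesis using snoc.IH[OF y(1)] y' snoc by auto
  qed
qed

lemma tpath_to_root: "tpath A w [] l \<Longrightarrow> l = []"
  by (cases l rule: rev_exhaust) (auto dest!: tpath_snoc trel_length)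

subsection \<open>The least models described explicitly\<close>

definition good_path :: "bool \<Rightarrow> enat \<Rightarrow> enat list \<Rightarrow> bool" where
  "good_path rc c ls \<longleftrightarrow> ls \<noteq> [] \<and> (\<forall>l\<in>set ls. c \<le> l) \<and> (rc \<or> c \<in> set ls)"

(* The c-relation of the least model: u is reached by a c-good path from a node w
   which reaches y through labels > c (so that y inherits the c-successors of w). *)
definition clo :: "bool \<Rightarrow> enat set \<Rightarrow> 'p fm \<Rightarrow> enat \<Rightarrow> (dir list \<times> dir list) set" where
  "clo rc S A c = {(y,u). c \<in> S \<and> (\<exists>w l1 l2. w \<in> tnodes A \<and> tpath A w y l1
      \<and> (\<forall>l\<in>set l1. c < l) \<and> tpath A w u l2 \<and> good_path rc c l2)}"

lemma good_path_weaken: "good_path rc b q \<Longrightarrow> c \<le> b \<Longrightarrow> (c = b \<or> rc) \<Longrightarrow> good_path rc c q"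
  unfolding good_path_def by (auto intro: order_trans)

lemma clo_outside: "c \<notin> S \<Longrightarrow> clo rc S A c = {}"
  unfolding clo_def by simp

(* The closure for c \<in> S does not depend on S; this lets RC use modalities outside S. *)
lemma clo_UNIV: "c \<in> S \<Longrightarrow> clo rc S A c = clo rc UNIV A c"
  unfolding clo_def by simp

lemma clo_nodes: "clo rc S A c \<subseteq> tnodes A \<times> tnodes A"
  unfolding clo_def using tpath_nodes by blast

lemma clo_trel: "c \<in> S \<Longrightarrow> trel A c \<subseteq> clo rc S A c"
proof
  fix p assume c: "c \<in> S" and p: "p \<in> trel A c"
  obtain y z where yz: "p = (y,z)" "(y,z) \<in> trel A c" using p by (cases p) auto
  have "tpath A y z [c]" using yz(2) tp_cons tp_nil by blast
  moreover have "good_path rc c [c]" by (simp add: good_path_def)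
  moreover have "y \<in> tnodes A" using trel_nodes yz(2) by blast
  ultimately show "p \<in> clo rc S A c" unfolding clo_def using c yz(1) tp_nil by fastforce
qed

lemma clo_comp:
  assumes "a \<in> S" "b \<in> S" "(x,y) \<in> clo rc S A a" "(y,z) \<in> clo rc S A b"
  shows "(x,z) \<in> clo rc S A (min a b)"
proof -
  obtain w1 p1 q1 where 1: "w1 \<in> tnodes A" "tpath A w1 x p1" "\<forall>l\<in>set p1. a < l"
      "tpath A w1 y q1" "good_path rc a q1"
    using assms(3) unfolding clo_def by blast
  obtain w2 p2 q2 where 2: "w2 \<in> tnodes A" "tpath A w2 y p2" "\<forall>l\<in>set p2. b < l"
      "tpath A w2 z q2" "good_path rc b q2"
    using assms(4) unfolding clo_def by blast
  have mS: "min a b \<in> S" using assms by (simp add: min_def)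
  have q1: "\<forall>v\<in>set q1. a \<le> v" "rc \<or> a \<in> set q1" using 1(5) unfolding good_path_def by blast+
  have q2: "\<forall>v\<in>set q2. b \<le> v" "rc \<or> b \<in> set q2" "q2 \<noteq> []"
    using 2(5) unfolding good_path_def by blast+
  have p1m: "\<forall>v\<in>set p1. min a b < v" using 1(3) by (simp add: min_less_iff_disj)
  from tpath_comparable[OF 1(4) 2(2)] show ?thesis
  proof
    (* w2 lies below w1: the composed good path runs from w1 through w2 to z *)
    assume "\<exists>l. tpath A w1 w2 l \<and> q1 = l @ p2"
    then obtain l where l: "tpath A w1 w2 l" "q1 = l @ p2" by blast
    have ge: "\<forall>v\<in>set (l@q2). min a b \<le> v" using q1(1) q2(1) l(2) by (auto simp: min_le_iff_disj)
    have "rc \<or> min a b \<in> set (l@q2)"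
    proof (cases "b \<le> a")
      case True then show ?thesis using q2(2) by (auto simp: min_def)
    next
      case False
      then have "a \<notin> set p2" using 2(3) by (meson linorder_not_le not_less_iff_gr_or_eq order.strict_trans)
      then show ?thesis using q1(2) l(2) False by (auto simp: min_def)
    qed
    then have "good_path rc (min a b) (l @ q2)" using ge q2(3) unfolding good_path_def by simp
    then show ?thesis unfolding clo_def using mS 1(1,2) p1m tpath_append[OF l(1) 2(4)] by blast
  next
    (* w1 lies below w2: x inherits the b-successor z from w2 *)
    assume "\<exists>l. tpath A w2 w1 l \<and> p2 = l @ q1"
    then obtain l where l: "tpath A w2 w1 l" "p2 = l @ q1" by blast
    have "rc" if "a < b"
    proof (rule ccontr)
      assume "\<not> rc"
      then have "a \<in> set p2" using q1(2) l(2) by simp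
      then show False using 2(3) that by (meson less_imp_le leD)
    qed
    then have "good_path rc (min a b) q2"
      using good_path_weaken[OF 2(5)] by (cases "b \<le> a") (auto simp: min_def)
    moreover have "\<forall>v\<in>set (l@p1). min a b < v" using p1m 2(3) l(2) by (auto simp: min_less_iff_disj)
    ultimately show ?thesis unfolding clo_def using mS 2(1,4) tpath_append[OF l(1) 1(2)] by blast
  qed
qed

lemma clo_J:
  assumes "b \<in> S" "a > b" "(x,y) \<in> clo rc S A a" "(x,z) \<in> clo rc S A b"
  shows "(y,z) \<in> clo rc S A b"
proof -
  obtain w1 p1 q1 where 1: "w1 \<in> tnodes A" "tpath A w1 x p1" "\<forall>l\<in>set p1. a < l"
      "tpath A w1 y q1" "good_path rc a q1"
    using assms(3) unfolding clo_def by blast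
  obtain w2 p2 q2 where 2: "w2 \<in> tnodes A" "tpath A w2 x p2" "\<forall>l\<in>set p2. b < l"
      "tpath A w2 z q2" "good_path rc b q2"
    using assms(4) unfolding clo_def by blast
  have q1: "\<forall>v\<in>set q1. b < v" using 1(5) assms(2) unfolding good_path_def by (meson less_le_trans)
  have p1: "\<forall>v\<in>set p1. b < v" using 1(3) assms(2) by (meson less_trans)
  from tpath_comparable[OF 1(2) 2(2)] show ?thesis
  proof
    assume "\<exists>l. tpath A w1 w2 l \<and> p1 = l @ p2"
    then obtain l where l: "tpath A w1 w2 l" "p1 = l @ p2" by blast
    have "\<forall>v\<in>set l. b \<le> v" using p1 l(2) by (simp add: less_imp_le)
    then have "good_path rc b (l @ q2)" using 2(5) unfolding good_path_def by auto
    then show ?thesis unfolding clo_def using assms(1) 1(1,4) q1 tpath_append[OF l(1) 2(4)] by blast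
  next
    assume "\<exists>l. tpath A w2 w1 l \<and> p2 = l @ p1"
    then obtain l where l: "tpath A w2 w1 l" "p2 = l @ p1" by blast
    have "\<forall>v\<in>set (l @ q1). b < v" using q1 2(3) l(2) by auto
    then show ?thesis unfolding clo_def using assms(1) 2(1,4,5) tpath_append[OF l(1) 1(4)] by blast
  qed
qed

(* The RC-condition R_a \<subseteq> R_b for b < a, available when c need not occur on good paths. *)
lemma clo_C:
  assumes "b < a" "b \<in> S"
  shows "clo True S A a \<subseteq> clo True S A b"
proof
  fix p assume "p \<in> clo True S A a"
  then obtain y u w l1 l2 where p: "p = (y,u)" "w \<in> tnodes A" "tpath A w y l1" "\<forall>l\<in>set l1. a < l"
      "tpath A w u l2" "good_path True a l2"
    unfolding clo_def by blast
  have "\<forall>l\<in>set l1. b < l" using p(4) assms(1) by (meson less_trans)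
  moreover have "good_path True b l2" using good_path_weaken[OF p(6)] assms(1) by simp
  ultimately show "p \<in> clo True S A b" unfolding clo_def using assms(2) p(1,2,3,5) by blast
qed

lemma clo_RJ_frame: "RJ_frame S (clo rc S A)"
  unfolding RJ_frame_def
proof (intro conjI ballI allI impI subsetI)
  fix a b p assume "a \<in> S" "b \<in> S" "p \<in> clo rc S A a O clo rc S A b"
  then show "p \<in> clo rc S A (min a b)" using clo_comp by blast
next
  fix a b x y z assume "b \<in> S" "a > b" "(x, y) \<in> clo rc S A a \<and> (x, z) \<in> clo rc S A b"
  then show "(y, z) \<in> clo rc S A b" using clo_J by blast
qed

lemma clo_RC_frame: "RC_frame S (clo True S A)"
  unfolding RC_frame_def using clo_RJ_frame clo_C by blast

lemma tpath_in_frame: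
  assumes frame: "RJ_frame S Rel" and S: "mods A \<subseteq> S" and tree: "\<forall>b\<in>S. trel A b \<subseteq> Rel b"
    and "tpath A w u l" "l \<noteq> []"
  shows "(w,u) \<in> Rel (Min (set l))"
  using assms(4,5)
proof (induction rule: tpath.induct)
  case (tp_nil x) then show ?case by simp
next
  case (tp_cons x y a z ls)
  have aS: "a \<in> S" using trel_mods tp_cons(1) S by blast
  have xy: "(x,y) \<in> Rel a" using tree aS tp_cons(1) by blast
  show ?case
  proof (cases "ls = []")
    case True then show ?thesis using tp_cons(2) xy by simp
  next
    case False
    have "Min (set ls) \<in> set ls" using False by simp
    then have "Min (set ls) \<in> S" using tpath_mods[OF tp_cons(2)] S by blast
    then have "(x,z) \<in> Rel (min a (Min (set ls)))"
      using frame aS xy tp_cons.IH[OF False] unfolding RJ_frame_def by blast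
    then show ?thesis using False by (simp add: Min_insert)
  qed
qed

(* By the J-condition, a c-successor of w is also one of each node reached from w via labels > c. *)
lemma tpath_inherit_in_frame:
  assumes frame: "RJ_frame S Rel" and S: "mods A \<subseteq> S" and tree: "\<forall>b\<in>S. trel A b \<subseteq> Rel b"
    and c: "c \<in> S" and "tpath A w y l" "\<forall>l\<in>set l. c < l" "(w,u) \<in> Rel c"
  shows "(y,u) \<in> Rel c"
  using assms(5-7)
proof (induction rule: tpath.induct)
  case (tp_nil x) then show ?case by simp
next
  case (tp_cons x y a z ls)
  have aS: "a \<in> S" using trel_mods tp_cons(1) S by blast
  have "(x,y) \<in> Rel a" using tree aS tp_cons(1) by blast
  then have "(y,u) \<in> Rel c" using frame aS c tp_cons.prems unfolding RJ_frame_def by auto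
  then show ?case using tp_cons.IH tp_cons.prems(1) by simp
qed

lemma clo_below:
  assumes frame: "RJ_frame S Rel" and C: "rc \<Longrightarrow> \<forall>a\<in>S. \<forall>b\<in>S. b < a \<longrightarrow> Rel a \<subseteq> Rel b"
    and S: "mods A \<subseteq> S" and tree: "\<forall>b\<in>S. trel A b \<subseteq> Rel b"
  shows "clo rc S A c \<subseteq> Rel c"
proof
  fix p assume "p \<in> clo rc S A c"
  then obtain y u w l1 l2 where p: "p = (y,u)" "c \<in> S" "tpath A w y l1" "\<forall>l\<in>set l1. c < l"
      "tpath A w u l2" "good_path rc c l2"
    unfolding clo_def by blast
  let ?m = "Min (set l2)"
  have l2: "l2 \<noteq> []" "\<forall>l\<in>set l2. c \<le> l" "rc \<or> c \<in> set l2" using p(6) unfolding good_path_def by auto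
  have m: "?m \<in> set l2" "c \<le> ?m" using l2 by auto
  have wu: "(w,u) \<in> Rel ?m" using tpath_in_frame[OF frame S tree p(5) l2(1)] .
  have "(w,u) \<in> Rel c"
  proof (cases "?m = c")
    case True then show ?thesis using wu by simp
  next
    case False
    then have "rc" "c < ?m" using l2 m by (auto simp: order.order_iff_strict)
    moreover have "?m \<in> S" using m(1) tpath_mods[OF p(5)] S by blast
    ultimately show ?thesis using C wu p(2) by blast
  qed
  then show "p \<in> Rel c" using tpath_inherit_in_frame[OF frame S tree p(2,3,4)] p(1) by blast
qed

lemma least_rels_clo:
  assumes S: "mods A \<subseteq> S" and P: "P S (clo rc S A)"
    and P_frame: "\<And>Rel. P S Rel \<Longrightarrow> RJ_frame S Rel \<and> (rc \<longrightarrow> (\<forall>a\<in>S. \<forall>b\<in>S. b < a \<longrightarrow> Rel a \<subseteq> Rel b))"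
  shows "least_rels P S A = clo rc S A"
proof
  fix a
  show "least_rels P S A a = clo rc S A a"
  proof (cases "a \<in> S")
    case False then show ?thesis by (simp add: least_rels_def clo_outside)
  next
    case True
    let ?Fam = "{Rel a | Rel. (\<forall>b\<in>S. trel A b \<subseteq> Rel b \<and> Rel b \<subseteq> tnodes A \<times> tnodes A) \<and> P S Rel}"
    have least: "least_rels P S A a = \<Inter> ?Fam" unfolding least_rels_def using True by simp
    have "\<forall>b\<in>S. trel A b \<subseteq> clo rc S A b \<and> clo rc S A b \<subseteq> tnodes A \<times> tnodes A"
      using clo_trel clo_nodes by blast
    then have "clo rc S A a \<in> ?Fam" using P by blast
    then have "least_rels P S A a \<subseteq> clo rc S A a" unfolding least by (rule Inter_lower)
    moreover have "clo rc S A a \<subseteq> least_rels P S A a"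
      unfolding least
    proof (rule Inter_greatest)
      fix X assume "X \<in> ?Fam"
      then obtain Rel where "X = Rel a" "\<forall>b\<in>S. trel A b \<subseteq> Rel b" "P S Rel" by blast
      then show "clo rc S A a \<subseteq> X" using clo_below[OF _ _ S] P_frame by blast
    qed
    ultimately show ?thesis by blast
  qed
qed

lemma RJ_model_rel_clo: "mods A \<subseteq> S \<Longrightarrow> RJ_model_rel S A = clo False S A"
  unfolding RJ_model_rel_def by (rule least_rels_clo) (simp_all add: clo_RJ_frame)

lemma RC_model_rel_clo: "mods A \<subseteq> S \<Longrightarrow> RC_model_rel S A = clo True S A"
  unfolding RC_model_rel_def
  by (rule least_rels_clo[where P=RC_frame, OF _ clo_RC_frame]) (simp_all add: RC_frame_def)

subsection \<open>Soundness\<close>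

lemma forces_hom:
  assumes "forces Rel V x F"
    and rel: "\<And>a y z. (y,z) \<in> Rel a \<Longrightarrow> (f y, f z) \<in> Rel' a"
    and val: "\<And>p y. y \<in> V p \<Longrightarrow> f y \<in> V' p"
  shows "forces Rel' V' (f x) F"
  using assms(1)
proof (induction F arbitrary: x)
  case (Dia a F)
  then show ?case using rel by fastforce
qed (auto intro: val)

lemma forces_cong: "(\<forall>a\<in>mods F. Rel a = Rel' a) \<Longrightarrow> forces Rel V x F = forces Rel' V x F"
  by (induction F arbitrary: x) auto

lemma emb_root: "emb d [] = []"
  by (simp add: emb_def)

lemma forces_tree: "forces (trel A) (tval A) [] A"
proof (induction A)
  case (Conj B C)
  have "forces (trel (Conj B C)) (tval (Conj B C)) (emb L []) B"
    by (rule forces_hom[OF Conj.IH(1), where f="emb L"]) (simp_all add: rev_image_eqI)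
  moreover have "forces (trel (Conj B C)) (tval (Conj B C)) (emb R []) C"
    by (rule forces_hom[OF Conj.IH(2), where f="emb R"]) (simp_all add: rev_image_eqI)
  ultimately show ?case unfolding emb_root forces.simps(3) by blast
next
  case (Dia b B)
  have "forces (trel (Dia b B)) (tval (Dia b B)) [D] B"
    by (rule forces_hom[OF Dia.IH, where f="(#) D"]) (simp_all add: rev_image_eqI)
  moreover have "([], [D]) \<in> trel (Dia b B) b" by simp
  ultimately show ?case unfolding forces.simps(4) by blast
qed auto

lemma clo_forces_root:
  assumes "mods A \<subseteq> S"
  shows "forces (clo rc S A) (tval A) [] A"
proof -
  have "(y,z) \<in> clo rc S A a" if "(y,z) \<in> trel A a" for a y z
    using clo_trel trel_mods[OF that] assms that by blast
  then show ?thesis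
    using forces_hom[OF forces_tree, where f=id and Rel'="clo rc S A" and V'="tval A"] by simp
qed

lemma sound_RJ:
  "RJ A B \<Longrightarrow> RJ_frame S Rel \<Longrightarrow> (\<forall>a. a \<notin> S \<longrightarrow> Rel a = {}) \<Longrightarrow> forces Rel V x A \<Longrightarrow> forces Rel V x B"
proof (induction arbitrary: x rule: RJ.induct)
  case (rj_trans a A)
  then obtain y z where yz: "(x,y) \<in> Rel a" "(y,z) \<in> Rel a" "forces Rel V z A" by auto
  have "a \<in> S" using rj_trans.prems(2) yz by blast
  then have "(x,z) \<in> Rel (min a a)" using rj_trans.prems(1) yz unfolding RJ_frame_def by blast
  then show ?case using yz by auto
next
  case (rj_mon1 a b A)
  then obtain y z where yz: "(x,y) \<in> Rel a" "(y,z) \<in> Rel b" "forces Rel V z A" by auto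
  have "a \<in> S" "b \<in> S" using rj_mon1.prems(2) yz by blast+
  then have "(x,z) \<in> Rel (min a b)" using rj_mon1.prems(1) yz unfolding RJ_frame_def by blast
  then show ?case using yz rj_mon1.hyps by (auto simp: min.absorb2)
next
  case (rj_mon2 a b A)
  then obtain y z where yz: "(x,y) \<in> Rel b" "(y,z) \<in> Rel a" "forces Rel V z A" by auto
  have "a \<in> S" "b \<in> S" using rj_mon2.prems(2) yz by blast+
  then have "(x,z) \<in> Rel (min b a)" using rj_mon2.prems(1) yz unfolding RJ_frame_def by blast
  then show ?case using yz rj_mon2.hyps by (auto simp: min.absorb1)
next
  case (rj_J a b A B)
  then obtain y z where yz: "(x,y) \<in> Rel a" "forces Rel V y A" "(x,z) \<in> Rel b" "forces Rel V z B" by auto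
  have "a \<in> S" "b \<in> S" using rj_J.prems(2) yz by blast+
  then have "(y,z) \<in> Rel b" using rj_J.prems(1) yz rj_J.hyps unfolding RJ_frame_def by blast
  then show ?case using yz by auto
qed auto

lemma sound_RC:
  assumes "RC A B" "RC_frame UNIV Rel" "forces Rel V x A"
  shows "forces Rel V x B"
proof -
  have RJ_sound: "forces Rel V y B'" if "RJ A' B'" "forces Rel V y A'" for A' B' y
    using sound_RJ[OF that(1) _ _ that(2), of UNIV] assms(2) unfolding RC_frame_def by blast
  have C: "b < a \<Longrightarrow> Rel a \<subseteq> Rel b" for a b using assms(2) unfolding RC_frame_def by blast
  from assms(1,3) show ?thesis
  proof (induction arbitrary: x rule: RC.induct)
    case (rc_trans a A) then show ?case by (rule RJ_sound[OF rj_trans])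
  next
    case (rc_mon1 a b A)
    show ?case using rc_mon1.prems by (rule RJ_sound[OF rj_mon1[OF rc_mon1.hyps]])
  next
    case (rc_mon2 a b A)
    show ?case using rc_mon2.prems by (rule RJ_sound[OF rj_mon2[OF rc_mon2.hyps]])
  next
    case (rc_J a b A B)
    show ?case using rc_J.prems by (rule RJ_sound[OF rj_J[OF rc_J.hyps]])
  next
    case (rc_C a b A) then show ?case using C by fastforce
  qed auto
qed

lemma RJ_sound_clo: "RJ A B \<Longrightarrow> forces (clo False (mods A) A) (tval A) [] B"
  by (rule sound_RJ[OF _ clo_RJ_frame _ clo_forces_root]) (simp_all add: clo_outside)

(* For RC we evaluate in the closure over all modalities, which agrees with clo on S. *)
lemma RC_sound_clo:
  assumes "RC A B" "mods B \<subseteq> S"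
  shows "forces (clo True S A) (tval A) [] B"
proof -
  have "forces (clo True UNIV A) (tval A) [] B"
    using sound_RC[OF assms(1) clo_RC_frame clo_forces_root] by simp
  moreover have "clo True UNIV A a = clo True S A a" if "a \<in> mods B" for a
    by (rule clo_UNIV[symmetric]) (use that assms(2) in blast)
  ultimately show ?thesis using forces_cong[of B "clo True UNIV A" "clo True S A"] by blast
qed

subsection \<open>Completeness\<close>

(* Termination measure for node_fm: paths in T[A] only go downwards. *)
definition height :: "'p fm \<Rightarrow> nat" where "height A = Max (length ` tnodes A)"

lemma length_le_height: "z \<in> tnodes A \<Longrightarrow> length z \<le> height A"
  unfolding height_def by (rule Max_ge) (auto simp: finite_tnodes)

(* Lets the function package see the recursive calls of node_fm inside the image. *)
declare image_cong[fundef_cong]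

(* The formula describing the subtree of T[A] below y (its variables and, recursively, its
   children), enriched at every node z by an extra formula G z. *)
function node_fm :: "(dir list \<Rightarrow> 'p fm) \<Rightarrow> 'p fm \<Rightarrow> dir list \<Rightarrow> 'p fm" where
 "node_fm G A y = Conj (Conj (bigconj (Var ` {p. y \<in> tval A p}))
      (bigconj ((\<lambda>(a,z). Dia a (node_fm G A z)) ` {(a,z). (y,z) \<in> trel A a}))) (G y)"
  by auto
termination
proof (relation "measure (\<lambda>(G,A,y). height A - length y)")
  fix G :: "dir list \<Rightarrow> 'p fm" and A y x a z
  assume "x \<in> {(a,z). (y,z) \<in> trel A a}" "(a,z) = x"
  then have "(y,z) \<in> trel A a" by auto
  then have "length y < length z" "length z \<le> height A"
    using trel_length trel_nodes length_le_height by blast+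
  then show "((G, A, z), G, A, y) \<in> measure (\<lambda>(G, A, y). height A - length y)" by auto
qed auto

declare node_fm.simps[simp del]

lemma finite_vars_at: "finite {p. y \<in> tval A p}"
  using finite_tval by (rule finite_subset[rotated]) auto

lemma finite_children: "finite {(a,z). (y,z) \<in> trel A a}"
proof -
  have "{(a,z). (y,z) \<in> trel A a} \<subseteq> mods A \<times> tnodes A" using trel_mods trel_nodes by blast
  then show ?thesis using finite_mods finite_tnodes finite_subset by blast
qed

lemma node_fm_vars: "der rc (node_fm G A y) (bigconj (Var ` {p. y \<in> tval A p}))"
  by (subst node_fm.simps) (rule der_cut[OF der_conjE1 der_conjE1])
lemma node_fm_children:
  "der rc (node_fm G A y) (bigconj ((\<lambda>(a,z). Dia a (node_fm G A z)) ` {(a,z). (y,z) \<in> trel A a}))"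
  by (subst node_fm.simps) (rule der_cut[OF der_conjE1 der_conjE2])
lemma node_fm_extra: "der rc (node_fm G A y) (G y)"
  by (subst node_fm.simps) (rule der_conjE2)

lemma node_fm_var: "y \<in> tval A p \<Longrightarrow> der rc (node_fm G A y) (Var p)"
  by (rule der_cut[OF node_fm_vars bigconj_mem[OF finite_imageI[OF finite_vars_at]]]) simp

lemma node_fm_child: "(y,z) \<in> trel A a \<Longrightarrow> der rc (node_fm G A y) (Dia a (node_fm G A z))"
proof -
  assume "(y,z) \<in> trel A a"
  then have "Dia a (node_fm G A z) \<in> (\<lambda>(a,z). Dia a (node_fm G A z)) ` {(a,z). (y,z) \<in> trel A a}"
    by force
  then show ?thesis by (rule der_cut[OF node_fm_children bigconj_mem[OF finite_imageI[OF finite_children]]])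
qed

lemma node_fm_path: "tpath A y u l \<Longrightarrow> l \<noteq> []
    \<Longrightarrow> der rc (node_fm G A y) (Dia (Min (set l)) (node_fm G A u))"
proof (induction rule: tpath.induct)
  case (tp_nil x)
  then show ?case by simp
next
  case (tp_cons x y a z ls)
  show ?case
  proof (cases "ls = []")
    case True
    then show ?thesis using tp_cons(2) node_fm_child[OF tp_cons(1)] by simp
  next
    case False
    have "der rc (node_fm G A x) (Dia a (Dia (Min (set ls)) (node_fm G A z)))"
      by (rule der_cut[OF node_fm_child[OF tp_cons(1)] der_mono[OF tp_cons.IH[OF False]]])
    then have "der rc (node_fm G A x) (Dia (min a (Min (set ls))) (node_fm G A z))"
      by (rule der_cut[OF _ der_dia_min])
    then show ?thesis using False by (simp add: Min_insert)
  qed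
qed

lemma node_fm_good_path: "tpath A y u l \<Longrightarrow> good_path rc c l
    \<Longrightarrow> der rc (node_fm G A y) (Dia c (node_fm G A u))"
proof -
  assume p: "tpath A y u l" and g: "good_path rc c l"
  then have l: "l \<noteq> []" by (simp add: good_path_def)
  have min: "der rc (node_fm G A y) (Dia (Min (set l)) (node_fm G A u))" using node_fm_path p l by blast
  have le: "c \<le> Min (set l)" using g l by (simp add: good_path_def)
  have "rc \<or> c = Min (set l)" using g l le unfolding good_path_def by (metis Min_le antisym finite_set)
  show ?thesis
  proof (cases "c = Min (set l)")
    case True then show ?thesis using min by simp
  next
    case False
    then have "rc" "c < Min (set l)" using le \<open>rc \<or> c = Min (set l)\<close> by auto
    then have "der rc (Dia (Min (set l)) (node_fm G A u)) (Dia c (node_fm G A u))"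
      using der_C by simp
    then show ?thesis by (rule der_cut[OF min])
  qed
qed

lemma node_fm_mono: "(\<forall>y. der rc (G y) (G' y)) \<Longrightarrow> der rc (node_fm G A y) (node_fm G' A y)"
proof (induction G A y rule: node_fm.induct)
  case (1 G A y)
  have "der rc (node_fm G A y)
      (bigconj ((\<lambda>(a,z). Dia a (node_fm G' A z)) ` {(a,z). (y,z) \<in> trel A a}))"
  proof (rule bigconj_intro[OF finite_imageI[OF finite_children]], safe)
    fix a z assume e: "(y,z) \<in> trel A a"
    then have "der rc (node_fm G A z) (node_fm G' A z)" using 1 by blast
    then show "der rc (node_fm G A y) (Dia a (node_fm G' A z))"
      by (rule der_cut[OF node_fm_child[OF e] der_mono])
  qed
  moreover have "der rc (node_fm G A y) (G' y)" using der_cut[OF node_fm_extra] 1(2) by blast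
  ultimately show ?case
    by (subst (2) node_fm.simps) (intro der_conjI node_fm_vars)
qed

fun subfm :: "'p fm \<Rightarrow> dir list \<Rightarrow> 'p fm" where
  "subfm (Conj B C) (L#y) = subfm B y"
| "subfm (Conj B C) (R#y) = subfm C y"
| "subfm (Dia a B) (D#y) = subfm B y"
| "subfm F y = F"

lemma subfm_root[simp]: "subfm A [] = A" by (cases A) auto

lemma subfm_embL: "der rc (subfm B y) F \<Longrightarrow> der rc (subfm (Conj B C) (emb L y)) F"
  by (cases "y = []") (simp_all add: emb_def der_cut[OF der_conjE1])
lemma subfm_embR: "der rc (subfm C y) F \<Longrightarrow> der rc (subfm (Conj B C) (emb R y)) F"
  by (cases "y = []") (simp_all add: emb_def der_cut[OF der_conjE2])

lemma subfm_var: "y \<in> tval A p \<Longrightarrow> der rc (subfm A y) (Var p)"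
proof (induction A arbitrary: y)
  case (Var q) then show ?case by (auto split: if_splits intro: der_refl)
next
  case (Conj B C)
  from Conj.prems show ?case
    by (auto intro: subfm_embL[OF Conj.IH(1)] subfm_embR[OF Conj.IH(2)])
qed auto

lemma subfm_child: "(y,z) \<in> trel A a \<Longrightarrow> der rc (subfm A y) (Dia a (subfm A z))"
proof (induction A arbitrary: y z)
  case (Conj B C)
  have target: "z \<noteq> []" if "(y,z) \<in> trel F a" for F :: "'p fm" and y z
    using trel_length[OF that] by fastforce
  from Conj.prems show ?case
  proof auto
    fix y' z' assume e: "(y',z') \<in> trel B a"
    show "der rc (subfm (Conj B C) (emb L y')) (Dia a (subfm (Conj B C) (emb L z')))"
      using subfm_embL[where C=C, OF Conj.IH(1)[OF e]] target[OF e] by (simp add: emb_def)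
  next
    fix y' z' assume e: "(y',z') \<in> trel C a"
    show "der rc (subfm (Conj B C) (emb R y')) (Dia a (subfm (Conj B C) (emb R z')))"
      using subfm_embR[where B=B, OF Conj.IH(2)[OF e]] target[OF e] by (simp add: emb_def)
  qed
next
  case (Dia b B)
  then show ?case by (auto split: if_splits intro: der_refl)
qed auto

(* The c-successors that node y inherits from a strict ancestor w (cf. the definition of clo). *)
definition inherited :: "bool \<Rightarrow> enat set \<Rightarrow> 'p fm \<Rightarrow> dir list \<Rightarrow> (enat \<times> dir list) set" where
  "inherited rc S A y = {(c,u). c \<in> S \<and> (\<exists>w l1 l2. w \<in> tnodes A \<and> tpath A w y l1 \<and> l1 \<noteq> [] \<and>
      (\<forall>l\<in>set l1. c < l) \<and> tpath A w u l2 \<and> good_path rc c l2)}"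

(* Only finitely many successors are inherited, so ctx_fm is a finite conjunction. *)
lemma inherited_finite: "finite S \<Longrightarrow> finite (inherited rc S A y)"
proof -
  assume "finite S"
  moreover have "inherited rc S A y \<subseteq> S \<times> tnodes A" unfolding inherited_def using tpath_nodes by blast
  ultimately show ?thesis using finite_tnodes finite_subset by blast
qed

lemma inherited_root: "inherited rc S A [] = {}"
  unfolding inherited_def using tpath_to_root by blast

lemma inherited_step:
  assumes "(c,u) \<in> inherited rc S A z" "(x,z) \<in> trel A a"
  shows "c < a \<and> ((c,u) \<in> inherited rc S A x \<or> (c \<in> S \<and> (\<exists>l. tpath A x u l \<and> good_path rc c l)))"
proof -
  obtain w l1 l2 where w: "c \<in> S" "w \<in> tnodes A" "tpath A w z l1" "l1 \<noteq> []" "\<forall>l\<in>set l1. c < l"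
      "tpath A w u l2" "good_path rc c l2"
    using assms(1) unfolding inherited_def by blast
  obtain l1' a' where l1: "l1 = l1' @ [a']" using w(4) by (cases l1 rule: rev_exhaust) auto
  obtain y' where y': "tpath A w y' l1'" "(y',z) \<in> trel A a'" using tpath_snoc w(3) l1 by blast
  have eq: "y' = x" "a' = a" using trel_parent[OF y'(2) assms(2)] by auto
  have ca: "c < a" using w(5) l1 eq by simp
  show ?thesis
  proof (cases "l1' = []")
    case True
    then have "w = x" using y'(1) eq by simp
    then show ?thesis using ca w by blast
  next
    case False
    then have "(c,u) \<in> inherited rc S A x" unfolding inherited_def using w l1 y'(1) eq by auto
    then show ?thesis using ca by blast
  qed
qed

primrec ctx_fm :: "bool \<Rightarrow> enat set \<Rightarrow> 'p fm \<Rightarrow> nat \<Rightarrow> dir list \<Rightarrow> 'p fm" where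
  "ctx_fm rc S A 0 = (\<lambda>y. Top)"
| "ctx_fm rc S A (Suc n) =
    (\<lambda>y. bigconj ((\<lambda>(c,u). Dia c (node_fm (ctx_fm rc S A n) A u)) ` inherited rc S A y))"

lemma ctx_fm_Suc: "ctx_fm rc S A (Suc n) y
    = bigconj ((\<lambda>(c,u). Dia c (node_fm (ctx_fm rc S A n) A u)) ` inherited rc S A y)"
  by simp
declare ctx_fm.simps(2)[simp del]

lemma bigconj_dia_mono:
  assumes "finite X" "\<forall>u. der rc (node_fm G A u) (node_fm G' A u)"
  shows "der rc (bigconj ((\<lambda>(c,u). Dia c (node_fm G A u)) ` X))
      (bigconj ((\<lambda>(c,u). Dia c (node_fm G' A u)) ` X))"
proof (rule bigconj_intro[OF finite_imageI[OF assms(1)]], rule ballI)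
  fix f assume "f \<in> (\<lambda>(c,u). Dia c (node_fm G' A u)) ` X"
  then obtain c u where cu: "(c,u) \<in> X" and f: "f = Dia c (node_fm G' A u)" by auto
  then have "Dia c (node_fm G A u) \<in> (\<lambda>(c,u). Dia c (node_fm G A u)) ` X" by force
  then have "der rc (bigconj ((\<lambda>(c,u). Dia c (node_fm G A u)) ` X)) (Dia c (node_fm G A u))"
    by (rule bigconj_mem[OF finite_imageI[OF assms(1)]])
  then show "der rc (bigconj ((\<lambda>(c,u). Dia c (node_fm G A u)) ` X)) f"
    unfolding f using der_cut der_mono assms(2) by blast
qed

lemma ctx_fm_mono: "finite S \<Longrightarrow> der rc (ctx_fm rc S A (Suc n) y) (ctx_fm rc S A n y)"
proof (induction n arbitrary: y)
  case 0
  then show ?case by (simp add: der_top)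
next
  case (Suc n)
  have "\<forall>u. der rc (node_fm (ctx_fm rc S A (Suc n)) A u) (node_fm (ctx_fm rc S A n) A u)"
    using node_fm_mono Suc by blast
  then show ?case
    unfolding ctx_fm_Suc[of rc S A "Suc n" y] ctx_fm_Suc[of rc S A n y]
    by (rule bigconj_dia_mono[OF inherited_finite[OF Suc.prems]])
qed

lemma subfm_derives_node_fm_gen:
  "(\<forall>x z a. (x,z) \<in> trel A a \<longrightarrow> der rc (Conj (subfm A x) (G x)) (Dia a (Conj (subfm A z) (G z))))
   \<Longrightarrow> der rc (Conj (subfm A y) (G y)) (node_fm G A y)"
proof (induction G A y rule: node_fm.induct)
  case (1 G A y)
  have "der rc (Conj (subfm A y) (G y)) (bigconj (Var ` {p. y \<in> tval A p}))"
  proof (rule bigconj_intro[OF finite_imageI[OF finite_vars_at]], safe)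
    fix p assume "y \<in> tval A p"
    then show "der rc (Conj (subfm A y) (G y)) (Var p)" by (rule der_cut[OF der_conjE1 subfm_var])
  qed
  moreover have "der rc (Conj (subfm A y) (G y))
      (bigconj ((\<lambda>(a,z). Dia a (node_fm G A z)) ` {(a,z). (y,z) \<in> trel A a}))"
  proof (rule bigconj_intro[OF finite_imageI[OF finite_children]], safe)
    fix a z assume e: "(y,z) \<in> trel A a"
    have "der rc (Conj (subfm A z) (G z)) (node_fm G A z)" using 1 e by blast
    moreover have "der rc (Conj (subfm A y) (G y)) (Dia a (Conj (subfm A z) (G z)))" using 1(2) e by blast
    ultimately show "der rc (Conj (subfm A y) (G y)) (Dia a (node_fm G A z))"
      using der_cut der_mono by blast
  qed
  ultimately show ?case by (subst node_fm.simps) (intro der_conjI der_conjE2)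
qed

lemma ctx_fm_inherited_step:
  assumes fin: "finite S" and e: "(x,z) \<in> trel A a" and cu: "(c,u) \<in> inherited rc S A z"
    and IH: "der rc (Conj (subfm A x) (ctx_fm rc S A m x)) (node_fm (ctx_fm rc S A m) A x)"
  shows "c < a \<and> der rc (Conj (subfm A x) (ctx_fm rc S A (Suc m) x)) (Dia c (node_fm (ctx_fm rc S A m) A u))"
proof -
  let ?H = "Conj (subfm A x) (ctx_fm rc S A (Suc m) x)"
  note step = inherited_step[OF cu e]
  have "der rc ?H (Dia c (node_fm (ctx_fm rc S A m) A u))"
  proof (cases "(c,u) \<in> inherited rc S A x")
    case True
    then have "Dia c (node_fm (ctx_fm rc S A m) A u)
        \<in> (\<lambda>(c,u). Dia c (node_fm (ctx_fm rc S A m) A u)) ` inherited rc S A x" by force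
    then have "der rc (ctx_fm rc S A (Suc m) x) (Dia c (node_fm (ctx_fm rc S A m) A u))"
      unfolding ctx_fm_Suc by (rule bigconj_mem[OF finite_imageI[OF inherited_finite[OF fin]]])
    then show ?thesis by (rule der_cut[OF der_conjE2])
  next
    case False
    then obtain l where l: "tpath A x u l" "good_path rc c l" using step by blast
    have "der rc ?H (Conj (subfm A x) (ctx_fm rc S A m x))"
      by (rule der_conjI[OF der_conjE1 der_cut[OF der_conjE2 ctx_fm_mono[OF fin]]])
    then have "der rc ?H (node_fm (ctx_fm rc S A m) A x)" by (rule der_cut[OF _ IH])
    then show ?thesis by (rule der_cut[OF _ node_fm_good_path[OF l]])
  qed
  then show ?thesis using step by blast
qed

(* Propagation along an edge x -a-> z uses the J-axiom to carry the inherited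
   successors (all with labels < a) under the a-diamond. *)
lemma subfm_derives_node_fm:
  "finite S \<Longrightarrow> der rc (Conj (subfm A y) (ctx_fm rc S A n y)) (node_fm (ctx_fm rc S A n) A y)"
proof (induction n arbitrary: y)
  case 0
  show ?case
  proof (rule subfm_derives_node_fm_gen, intro allI impI)
    fix x z a assume e: "(x,z) \<in> trel A a"
    have "der rc (subfm A z) (Conj (subfm A z) (ctx_fm rc S A 0 z))"
      by (simp add: der_conjI der_refl der_top)
    then have "der rc (subfm A x) (Dia a (Conj (subfm A z) (ctx_fm rc S A 0 z)))"
      by (rule der_cut[OF subfm_child[OF e] der_mono])
    then show "der rc (Conj (subfm A x) (ctx_fm rc S A 0 x)) (Dia a (Conj (subfm A z) (ctx_fm rc S A 0 z)))"
      by (rule der_cut[OF der_conjE1])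
  qed
next
  case (Suc m)
  show ?case
  proof (rule subfm_derives_node_fm_gen, intro allI impI)
    fix x z a assume e: "(x,z) \<in> trel A a"
    let ?H = "Conj (subfm A x) (ctx_fm rc S A (Suc m) x)"
    let ?f = "\<lambda>(c,u). Dia c (node_fm (ctx_fm rc S A m) A u)"
    have sub: "der rc ?H (Dia a (subfm A z))" by (rule der_cut[OF der_conjE1 subfm_child[OF e]])
    have "\<forall>f\<in>?f ` inherited rc S A z. \<exists>c F. f = Dia c F \<and> c < a \<and> der rc ?H f"
      using ctx_fm_inherited_step[OF Suc.prems e _ Suc.IH[OF Suc.prems]] by fast
    then have "der rc ?H (Dia a (Conj (subfm A z) (bigconj (?f ` inherited rc S A z))))"
      by (rule der_J_bigconj[OF finite_imageI[OF inherited_finite[OF Suc.prems]] sub])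
    then show "der rc ?H (Dia a (Conj (subfm A z) (ctx_fm rc S A (Suc m) z)))" by (simp only: ctx_fm_Suc)
  qed
qed

primrec depth :: "'p fm \<Rightarrow> nat" where
  "depth (Var p) = 0"
| "depth Top = 0"
| "depth (Conj A B) = max (depth A) (depth B)"
| "depth (Dia a A) = Suc (depth A)"

(* Every clo-successor u of y is described at y: it is either reached from y itself by a good
   path, or inherited from a strict ancestor and hence recorded in the context formula. *)
lemma node_fm_clo_successor:
  assumes fin: "finite S" and yu: "(y,u) \<in> clo rc S A c"
  shows "der rc (node_fm (ctx_fm rc S A (Suc m)) A y) (Dia c (node_fm (ctx_fm rc S A m) A u))"
proof -
  obtain w l1 l2 where w: "c \<in> S" "w \<in> tnodes A" "tpath A w y l1" "\<forall>l\<in>set l1. c < l"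
      "tpath A w u l2" "good_path rc c l2"
    using yu unfolding clo_def by blast
  show ?thesis
  proof (cases "l1 = []")
    case True
    then have "w = y" using w(3) by simp
    then have "der rc (node_fm (ctx_fm rc S A (Suc m)) A y) (Dia c (node_fm (ctx_fm rc S A (Suc m)) A u))"
      using node_fm_good_path w by blast
    moreover have "der rc (node_fm (ctx_fm rc S A (Suc m)) A u) (node_fm (ctx_fm rc S A m) A u)"
      using node_fm_mono ctx_fm_mono[OF fin] by blast
    ultimately show ?thesis using der_cut der_mono by blast
  next
    case False
    then have "(c,u) \<in> inherited rc S A y" unfolding inherited_def using w by blast
    then have "Dia c (node_fm (ctx_fm rc S A m) A u)
        \<in> (\<lambda>(c,u). Dia c (node_fm (ctx_fm rc S A m) A u)) ` inherited rc S A y" by force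
    then have "der rc (ctx_fm rc S A (Suc m) y) (Dia c (node_fm (ctx_fm rc S A m) A u))"
      unfolding ctx_fm_Suc by (rule bigconj_mem[OF finite_imageI[OF inherited_finite[OF fin]]])
    then show ?thesis by (rule der_cut[OF node_fm_extra])
  qed
qed

lemma truth_lemma: "finite S \<Longrightarrow> y \<in> tnodes A \<Longrightarrow> forces (clo rc S A) (tval A) y B \<Longrightarrow> depth B \<le> n
  \<Longrightarrow> der rc (node_fm (ctx_fm rc S A n) A y) B"
proof (induction B arbitrary: y n)
  case (Var p)
  then show ?case by (simp add: node_fm_var)
next
  case Top
  then show ?case by (simp add: der_top)
next
  case (Conj B1 B2)
  then show ?case by (simp add: der_conjI)
next
  case (Dia c B)
  obtain m where n: "n = Suc m" using Dia.prems(4) by (cases n) auto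
  obtain u where u: "(y,u) \<in> clo rc S A c" "forces (clo rc S A) (tval A) u B" using Dia.prems(3) by auto
  have "u \<in> tnodes A" using clo_nodes u(1) by blast
  then have "der rc (node_fm (ctx_fm rc S A m) A u) B"
    using Dia.IH[OF Dia.prems(1) _ u(2)] Dia.prems(4) n by simp
  then show ?case
    unfolding n by (rule der_cut[OF node_fm_clo_successor[OF Dia.prems(1) u(1)] der_mono])
qed

lemma completeness: "finite S \<Longrightarrow> forces (clo rc S A) (tval A) [] B \<Longrightarrow> der rc A B"
proof -
  assume fin: "finite S" and forced: "forces (clo rc S A) (tval A) [] B"
  have "der rc A (ctx_fm rc S A (depth B) [])"
    by (cases "depth B") (simp_all add: der_top ctx_fm_Suc inherited_root bigconj_intro)
  then have "der rc A (Conj (subfm A []) (ctx_fm rc S A (depth B) []))"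
    using der_conjI[OF der_refl] by simp
  then have "der rc A (node_fm (ctx_fm rc S A (depth B)) A [])"
    by (rule der_cut[OF _ subfm_derives_node_fm[OF fin]])
  then show ?thesis by (rule der_cut[OF _ truth_lemma[OF fin root_node forced le_refl]])
qed

theorem theorem5p2:
  fixes A B :: "'p fm"
  shows "(RJ A B \<longleftrightarrow> forces (RJ_model_rel (mods A) A) (tval A) [] B)
       \<and> (RC A B \<longleftrightarrow> forces (RC_model_rel (mods A \<union> mods B) A) (tval A) [] B)"
proof
  have model: "RJ_model_rel (mods A) A = clo False (mods A) A"
    by (rule RJ_model_rel_clo) simp
  have "RJ A B \<longleftrightarrow> forces (clo False (mods A) A) (tval A) [] B"
    using RJ_sound_clo completeness[of "mods A" False A B] by (auto simp: der_def finite_mods)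
  then show "RJ A B \<longleftrightarrow> forces (RJ_model_rel (mods A) A) (tval A) [] B"
    unfolding model .
next
  let ?S = "mods A \<union> mods B"
  have model: "RC_model_rel ?S A = clo True ?S A"
    by (rule RC_model_rel_clo) simp
  have "RC A B \<longleftrightarrow> forces (clo True ?S A) (tval A) [] B"
    using RC_sound_clo[of A B ?S] completeness[of ?S True A B] by (auto simp: der_def finite_mods)
  then show "RC A B \<longleftrightarrow> forces (RC_model_rel ?S A) (tval A) [] B"
    unfolding model .
qed

end
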